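(* Let $\sigma_X=(\sigma_X^0,\sigma_X[\cdot,\cdot])$ be a memory-one strategy for $X$ and $\sigma_Y$ any behavioral strategy for $Y$, generating the measures $\nu_t$. Then for every measurable $E\subseteq S_X$, $$\sum_{t=0}^\infty\lambda^t\int_{S_X\times S_Y}\Big[\mathbf{1}_E(x)-\lambda\,\sigma_X[x,y](E)\Big]\,d\nu_t(x,y)=\sigma_X^0(E).$$
   Context: Standing framework. Let $S_X,S_Y$ be measurable spaces, and $\lambda\in(0,1)$. For $T\ge 0$ let $\mathcal{H}^T=(S_X\times S_Y)^T$ ($\mathcal{H}^0=\{\varnothing\}$) and $\mathcal{H}=\bigsqcup_{T\ge0}\mathcal{H}^T$. A behavioral strategy for $X$ (resp. $Y$) is a Markov kernel from $\mathcal{H}$ to $S_X$ (resp. $S_Y$). A memory-one strategy for $X$ is a behavioral strategy determined by a probability measure $\sigma_X^0$ on $S_X$ (used at the empty history) and a Markov kernel $(x,y)\mapsto\sigma_X[x,y]$ from $S_X\times S_Y$ to $S_X$, with $\sigma_X[h^T]=\sigma_X[x_{T-1},y_{T-1}]$ for $h^T=((x_0,y_0),\dots,(x_{T-1},y_{T-1}))$, $T\ge1$. Given behavioral strategies $\sigma_X,\sigma_Y$, put $\sigma(h)=\sigma_X[h]\otimes\sigma_Y[h]$ and define probability measures $\mu_t$ on $\mathcal{H}^{t+1}$ by $\mu_0=\sigma(\varnothing)$ and $\mu_t(E'\times E)=\int_{E'}\sigma(h)(E)\,d\mu_{t-1}(h)$ (uniquely extended). Let $\nu_t(E)=\mu_t(\mathcal{H}^t\times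 E)$ be the distribution of the action pair at time $t$. $\mathbf{1}_E$ denotes the indicator of $E$. *)

theory Defs
  imports "HOL-Probability.Probability"
begin

text \<open>Histories of length T are functions on {..<T} (PiM), the T-th action pair being h T.
  The disjoint union H is handled by indexing strategies with the history length T.\<close>

definition hist_space :: "'x measure \<Rightarrow> 'y measure \<Rightarrow> nat \<Rightarrow> (nat \<Rightarrow> 'x \<times> 'y) measure" where
  "hist_space MX MY T = PiM {..<T} (\<lambda>_. MX \<Otimes>\<^sub>M MY)"

definition behavioral ::
  "'x measure \<Rightarrow> 'y measure \<Rightarrow> 'a measure \<Rightarrow> (nat \<Rightarrow> (nat \<Rightarrow> 'x \<times> 'y) \<Rightarrow> 'a measure) \<Rightarrow> bool" where
  "behavioral MX MY MA s \<longleftrightarrow> (\<forall>T. s T \<in> hist_space MX MY T \<rightarrow>\<^sub>M prob_algebra MA)"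

definition memory_one ::
  "'x measure \<Rightarrow> 'y measure \<Rightarrow> (nat \<Rightarrow> (nat \<Rightarrow> 'x \<times> 'y) \<Rightarrow> 'x measure)
     \<Rightarrow> 'x measure \<Rightarrow> ('x \<times> 'y \<Rightarrow> 'x measure) \<Rightarrow> bool" where
  "memory_one MX MY s s0 K \<longleftrightarrow>
     s0 \<in> space (prob_algebra MX) \<and>
     K \<in> (MX \<Otimes>\<^sub>M MY) \<rightarrow>\<^sub>M prob_algebra MX \<and>
     (\<forall>h\<in>space (hist_space MX MY 0). s 0 h = s0) \<and>
     (\<forall>T. \<forall>h\<in>space (hist_space MX MY (Suc T)). s (Suc T) h = K (h T))"

primrec play ::
  "'x measure \<Rightarrow> 'y measure \<Rightarrow> (nat \<Rightarrow> (nat \<Rightarrow> 'x \<times> 'y) \<Rightarrow> 'x measure)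
     \<Rightarrow> (nat \<Rightarrow> (nat \<Rightarrow> 'x \<times> 'y) \<Rightarrow> 'y measure) \<Rightarrow> nat \<Rightarrow> (nat \<Rightarrow> 'x \<times> 'y) measure" where
  "play MX MY sX sY 0 =
     distr (sX 0 (\<lambda>_. undefined) \<Otimes>\<^sub>M sY 0 (\<lambda>_. undefined)) (hist_space MX MY 1)
       (\<lambda>a. \<lambda>i\<in>{..<1}. a)"
| "play MX MY sX sY (Suc t) =
     bind (play MX MY sX sY t)
       (\<lambda>h. distr (sX (Suc t) h \<Otimes>\<^sub>M sY (Suc t) h) (hist_space MX MY (Suc (Suc t)))
              (\<lambda>a. h(Suc t := a)))"

definition act_dist ::
  "'x measure \<Rightarrow> 'y measure \<Rightarrow> (nat \<Rightarrow> (nat \<Rightarrow> 'x \<times> 'y) \<Rightarrow> 'x measure)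
     \<Rightarrow> (nat \<Rightarrow> (nat \<Rightarrow> 'x \<times> 'y) \<Rightarrow> 'y measure) \<Rightarrow> nat \<Rightarrow> ('x \<times> 'y) measure" where
  "act_dist MX MY sX sY t = distr (play MX MY sX sY t) (MX \<Otimes>\<^sub>M MY) (\<lambda>h. h t)"

end

theory Submission
  imports Defs
begin

text \<open>Let \<open>a t\<close> be the probability \<open>\<nu>\<^sub>t(E \<times> S\<^sub>Y)\<close> that X's action at time \<open>t\<close> lies in \<open>E\<close>.
  Then \<open>a 0 = \<sigma>\<^sub>X\<^sup>0(E)\<close>, and since X's action at time \<open>t + 1\<close> is drawn from \<open>\<sigma>\<^sub>X[x\<^sub>t, y\<^sub>t]\<close>,
  \<open>a (t + 1) = \<integral> \<sigma>\<^sub>X[x, y](E) d\<nu>\<^sub>t\<close>. So the \<open>t\<close>-th term of the series is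
  \<open>\<lambda>\<^sup>t a t - \<lambda>\<^sup>t\<^sup>+\<^sup>1 a (t + 1)\<close>, and the series telescopes to \<open>a 0\<close>.\<close>

lemma space_hist_space_0: "space (hist_space MX MY 0) = {\<lambda>_. undefined}"
  by (simp add: hist_space_def space_PiM)

lemma measurable_hist_component:
  "i < T \<Longrightarrow> (\<lambda>h. h i) \<in> hist_space MX MY T \<rightarrow>\<^sub>M MX \<Otimes>\<^sub>M MY"
  unfolding hist_space_def by (rule measurable_component_singleton) simp

lemma measurable_hist_extend:
  "(\<lambda>(h, a). h(T := a)) \<in> hist_space MX MY T \<Otimes>\<^sub>M (MX \<Otimes>\<^sub>M MY) \<rightarrow>\<^sub>M hist_space MX MY (Suc T)"
  unfolding hist_space_def
  using measurable_fun_upd[where I="{..<Suc T}" and J="{..<T}" and i=T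
      and f=fst and h=snd and N="PiM {..<T} (\<lambda>_. MX \<Otimes>\<^sub>M MY) \<Otimes>\<^sub>M (MX \<Otimes>\<^sub>M MY)"
      and M="\<lambda>_. MX \<Otimes>\<^sub>M MY"]
  by (auto simp: case_prod_beta lessThan_Suc)

lemma emeasure_pair_measure_Times_space:
  assumes "prob_space M" "A \<in> sets N"
  shows "emeasure (N \<Otimes>\<^sub>M M) (A \<times> space M) = emeasure N A"
  using sigma_finite_measure.emeasure_pair_measure_Times[OF prob_space_imp_sigma_finite[OF assms(1)] assms(2)]
    prob_space.emeasure_space_1[OF assms(1)] by simp

lemma memory_one_imp_behavioral:
  assumes "memory_one MX MY sX s0 K"
  shows "behavioral MX MY MX sX"
  unfolding behavioral_def
proof
  fix T
  have s0: "s0 \<in> space (prob_algebra MX)" and K: "K \<in> MX \<Otimes>\<^sub>M MY \<rightarrow>\<^sub>M prob_algebra MX"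
    using assms by (auto simp: memory_one_def)
  show "sX T \<in> hist_space MX MY T \<rightarrow>\<^sub>M prob_algebra MX"
  proof (cases T)
    case 0
    then show ?thesis
      using assms measurable_const[OF s0] unfolding memory_one_def
      by (subst measurable_cong[where g="\<lambda>_. s0"]) auto
  next
    case (Suc T')
    then show ?thesis
      using assms measurable_compose[OF measurable_hist_component K, of T'] unfolding memory_one_def
      by (subst measurable_cong[where g="\<lambda>h. K (h T')"]) auto
  qed
qed

lemma discounted_telescope_sums:
  fixes a :: "nat \<Rightarrow> real"
  assumes "\<bar>lam\<bar> < 1" and "\<And>t. \<bar>a t\<bar> \<le> B"
  shows "(\<lambda>t. lam ^ t * (a t - lam * a (Suc t))) sums a 0"
proof -
  have "(\<lambda>t. lam ^ t * a t) \<longlonglongrightarrow> 0"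
  proof (rule Lim_null_comparison)
    show "\<forall>\<^sub>F t in sequentially. norm (lam ^ t * a t) \<le> \<bar>lam\<bar> ^ t * B"
      using assms(2) by (auto simp: abs_mult power_abs intro!: always_eventually mult_left_mono)
    show "(\<lambda>t. \<bar>lam\<bar> ^ t * B) \<longlonglongrightarrow> 0"
      using assms(1) by (intro tendsto_mult_left_zero LIMSEQ_power_zero) auto
  qed
  from telescope_sums'[OF this] show ?thesis
    by (simp add: algebra_simps)
qed

lemma integral_indicator_fst:
  assumes "sets N = sets (M1 \<Otimes>\<^sub>M M2)"
  shows "(\<integral>p. indicator A (fst p) \<partial>N) = measure N ((A \<inter> space M1) \<times> space M2)"
proof -
  have "space N = space M1 \<times> space M2"
    using sets_eq_imp_space_eq[OF assms] by (simp add: space_pair_measure)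
  then have "(\<integral>p. indicator A (fst p) \<partial>N) = (\<integral>p. indicator ((A \<inter> space M1) \<times> space M2) p \<partial>N)"
    by (intro Bochner_Integration.integral_cong) (auto simp: indicator_def)
  also have "\<dots> = measure N ((A \<inter> space M1) \<times> space M2)"
    using \<open>space N = _\<close> by (simp add: Int_absorb2 Sigma_mono)
  finally show ?thesis .
qed

locale strategy_profile =
  fixes MX :: "'x measure" and MY :: "'y measure"
    and sX :: "nat \<Rightarrow> (nat \<Rightarrow> 'x \<times> 'y) \<Rightarrow> 'x measure"
    and sY :: "nat \<Rightarrow> (nat \<Rightarrow> 'x \<times> 'y) \<Rightarrow> 'y measure"
  assumes behavioral_X: "behavioral MX MY MX sX"
    and behavioral_Y: "behavioral MX MY MY sY"
begin

lemma measurable_action_pair: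
  "(\<lambda>h. sX T h \<Otimes>\<^sub>M sY T h) \<in> hist_space MX MY T \<rightarrow>\<^sub>M prob_algebra (MX \<Otimes>\<^sub>M MY)"
  using behavioral_X behavioral_Y unfolding behavioral_def by (intro measurable_pair_prob) auto

lemma action_pair_prob_algebra:
  "h \<in> space (hist_space MX MY T) \<Longrightarrow> sX T h \<Otimes>\<^sub>M sY T h \<in> space (prob_algebra (MX \<Otimes>\<^sub>M MY))"
  using measurable_space[OF measurable_action_pair] .

lemma measurable_play_step:
  "(\<lambda>h. distr (sX (Suc t) h \<Otimes>\<^sub>M sY (Suc t) h) (hist_space MX MY (Suc (Suc t))) (\<lambda>a. h(Suc t := a)))
     \<in> hist_space MX MY (Suc t) \<rightarrow>\<^sub>M prob_algebra (hist_space MX MY (Suc (Suc t)))"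
  using measurable_distr_prob_space2[OF measurable_action_pair measurable_hist_extend] .

lemma play_prob_algebra: "play MX MY sX sY t \<in> space (prob_algebra (hist_space MX MY (Suc t)))"
proof (induction t)
  case 0
  have "(\<lambda>a. \<lambda>i\<in>{..<1::nat}. a) \<in> MX \<Otimes>\<^sub>M MY \<rightarrow>\<^sub>M hist_space MX MY 1"
    unfolding hist_space_def by (intro measurable_restrict) auto
  from measurable_space[OF measurable_distr_prob_space[OF this] action_pair_prob_algebra]
  show ?case by (simp add: space_hist_space_0)
next
  case (Suc t)
  then show ?case
    using sets_bind'[OF Suc measurable_play_step] prob_space_bind'[OF Suc measurable_play_step]
    by (simp add: space_prob_algebra)
qed

lemma sets_play: "sets (play MX MY sX sY t) = sets (hist_space MX MY (Suc t))"
  and prob_space_play: "prob_space (play MX MY sX sY t)"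
  using play_prob_algebra[of t] by (simp_all add: space_prob_algebra)

lemma space_play: "space (play MX MY sX sY t) = space (hist_space MX MY (Suc t))"
  using sets_eq_imp_space_eq[OF sets_play] .

lemma measurable_play_component: "i \<le> t \<Longrightarrow> (\<lambda>h. h i) \<in> play MX MY sX sY t \<rightarrow>\<^sub>M MX \<Otimes>\<^sub>M MY"
  unfolding measurable_cong_sets[OF sets_play refl] by (rule measurable_hist_component) simp

lemma act_dist_0: "act_dist MX MY sX sY 0 = sX 0 (\<lambda>_. undefined) \<Otimes>\<^sub>M sY 0 (\<lambda>_. undefined)"
proof -
  let ?Q = "sX 0 (\<lambda>_. undefined) \<Otimes>\<^sub>M sY 0 (\<lambda>_. undefined)"
  have Q: "sets ?Q = sets (MX \<Otimes>\<^sub>M MY)"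
    using action_pair_prob_algebra[of "\<lambda>_. undefined" 0] by (simp add: space_hist_space_0 space_prob_algebra)
  have "(\<lambda>a. \<lambda>i\<in>{..<1::nat}. a) \<in> ?Q \<rightarrow>\<^sub>M hist_space MX MY 1"
    unfolding hist_space_def measurable_cong_sets[OF Q refl] by (intro measurable_restrict) auto
  then have "act_dist MX MY sX sY 0 = distr ?Q (MX \<Otimes>\<^sub>M MY) (\<lambda>a. a)"
    unfolding act_dist_def play.simps
    by (subst distr_distr[OF measurable_hist_component]) (auto simp: comp_def)
  also have "\<dots> = ?Q" by (rule distr_id2[OF Q[symmetric]])
  finally show ?thesis .
qed

lemma act_dist_Suc:
  "act_dist MX MY sX sY (Suc t) = play MX MY sX sY t \<bind> (\<lambda>h. sX (Suc t) h \<Otimes>\<^sub>M sY (Suc t) h)"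
proof -
  let ?H = "hist_space MX MY" and ?P = "play MX MY sX sY t"
  have step: "(\<lambda>h. distr (sX (Suc t) h \<Otimes>\<^sub>M sY (Suc t) h) (?H (Suc (Suc t))) (\<lambda>a. h(Suc t := a)))
      \<in> ?P \<rightarrow>\<^sub>M subprob_algebra (?H (Suc (Suc t)))"
    unfolding measurable_cong_sets[OF sets_play refl] by (rule measurable_prob_algebraD[OF measurable_play_step])
  have proj: "(\<lambda>h. h (Suc t)) \<in> ?H (Suc (Suc t)) \<rightarrow>\<^sub>M MX \<Otimes>\<^sub>M MY"
    by (rule measurable_hist_component) simp
  have "act_dist MX MY sX sY (Suc t)
      = ?P \<bind> (\<lambda>h. distr (distr (sX (Suc t) h \<Otimes>\<^sub>M sY (Suc t) h) (?H (Suc (Suc t))) (\<lambda>a. h(Suc t := a)))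
                    (MX \<Otimes>\<^sub>M MY) (\<lambda>h'. h' (Suc t)))"
    unfolding act_dist_def play.simps
    by (rule distr_bind[OF step prob_space.not_empty[OF prob_space_play] proj])
  also have "\<dots> = ?P \<bind> (\<lambda>h. sX (Suc t) h \<Otimes>\<^sub>M sY (Suc t) h)"
  proof (rule bind_cong[OF refl])
    fix h assume "h \<in> space ?P"
    then have h: "h \<in> space (?H (Suc t))" by (simp add: space_play)
    let ?Q = "sX (Suc t) h \<Otimes>\<^sub>M sY (Suc t) h"
    have Q: "sets ?Q = sets (MX \<Otimes>\<^sub>M MY)"
      using action_pair_prob_algebra[OF h] by (simp add: space_prob_algebra)
    have "(\<lambda>a. h(Suc t := a)) \<in> ?Q \<rightarrow>\<^sub>M ?H (Suc (Suc t))"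
      unfolding measurable_cong_sets[OF Q refl]
      using measurable_compose[OF measurable_Pair1'[OF h] measurable_hist_extend] by simp
    then show "distr (distr ?Q (?H (Suc (Suc t))) (\<lambda>a. h(Suc t := a))) (MX \<Otimes>\<^sub>M MY) (\<lambda>h'. h' (Suc t)) = ?Q"
      by (simp add: distr_distr[OF measurable_hist_component] comp_def distr_id2[OF Q[symmetric]])
  qed
  finally show ?thesis .
qed

lemma sets_act_dist: "sets (act_dist MX MY sX sY t) = sets (MX \<Otimes>\<^sub>M MY)"
  by (simp add: act_dist_def)

lemma prob_space_act_dist: "prob_space (act_dist MX MY sX sY t)"
  unfolding act_dist_def using prob_space_play by (rule prob_space.prob_space_distr) (simp add: measurable_play_component)

lemma emeasure_action_pair_fst:
  assumes "h \<in> space (hist_space MX MY T)" "A \<in> sets MX"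
  shows "emeasure (sX T h \<Otimes>\<^sub>M sY T h) (A \<times> space MY) = emeasure (sX T h) A"
proof -
  have "sY T h \<in> space (prob_algebra MY)"
    using measurable_space[OF behavioral_Y[unfolded behavioral_def, rule_format] assms(1)] .
  then have Y: "prob_space (sY T h)" "sets (sY T h) = sets MY"
    by (auto simp: space_prob_algebra)
  have "sX T h \<in> space (prob_algebra MX)"
    using measurable_space[OF behavioral_X[unfolded behavioral_def, rule_format] assms(1)] .
  then have "A \<in> sets (sX T h)"
    using assms(2) by (simp add: space_prob_algebra)
  from emeasure_pair_measure_Times_space[OF Y(1) this] show ?thesis
    by (simp add: sets_eq_imp_space_eq[OF Y(2)])
qed

lemma emeasure_act_dist_0_fst:
  "A \<in> sets MX \<Longrightarrow> emeasure (act_dist MX MY sX sY 0) (A \<times> space MY) = emeasure (sX 0 (\<lambda>_. undefined)) A"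
  by (simp add: act_dist_0 emeasure_action_pair_fst space_hist_space_0)

lemma emeasure_act_dist_Suc_fst:
  assumes "A \<in> sets MX"
  shows "emeasure (act_dist MX MY sX sY (Suc t)) (A \<times> space MY)
    = (\<integral>\<^sup>+h. emeasure (sX (Suc t) h) A \<partial>play MX MY sX sY t)"
proof -
  have "A \<times> space MY \<in> sets (MX \<Otimes>\<^sub>M MY)" using assms by (intro pair_measureI) auto
  then have "emeasure (act_dist MX MY sX sY (Suc t)) (A \<times> space MY)
      = (\<integral>\<^sup>+h. emeasure (sX (Suc t) h \<Otimes>\<^sub>M sY (Suc t) h) (A \<times> space MY) \<partial>play MX MY sX sY t)"
    unfolding act_dist_Suc by (rule emeasure_bind_prob_algebra[OF play_prob_algebra measurable_action_pair])
  also have "\<dots> = (\<integral>\<^sup>+h. emeasure (sX (Suc t) h) A \<partial>play MX MY sX sY t)"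
  proof (rule nn_integral_cong)
    fix h assume "h \<in> space (play MX MY sX sY t)"
    then have "h \<in> space (hist_space MX MY (Suc t))" by (simp add: space_play)
    then show "emeasure (sX (Suc t) h \<Otimes>\<^sub>M sY (Suc t) h) (A \<times> space MY) = emeasure (sX (Suc t) h) A"
      using assms by (rule emeasure_action_pair_fst)
  qed
  finally show ?thesis .
qed

end

locale memory_one_profile =
  fixes MX :: "'x measure" and MY :: "'y measure"
    and sX :: "nat \<Rightarrow> (nat \<Rightarrow> 'x \<times> 'y) \<Rightarrow> 'x measure"
    and sY :: "nat \<Rightarrow> (nat \<Rightarrow> 'x \<times> 'y) \<Rightarrow> 'y measure"
    and s0 :: "'x measure" and K :: "'x \<times> 'y \<Rightarrow> 'x measure"
  assumes memory_one: "memory_one MX MY sX s0 K"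
    and behavioral_opponent: "behavioral MX MY MY sY"

sublocale memory_one_profile \<subseteq> strategy_profile
  by unfold_locales (rule memory_one_imp_behavioral[OF memory_one], rule behavioral_opponent)

context memory_one_profile
begin

lemma measurable_kernel: "K \<in> MX \<Otimes>\<^sub>M MY \<rightarrow>\<^sub>M prob_algebra MX"
  using memory_one by (simp add: memory_one_def)

lemma kernel_prob_algebra: "p \<in> space (act_dist MX MY sX sY t) \<Longrightarrow> K p \<in> space (prob_algebra MX)"
  using measurable_space[OF measurable_kernel] by (simp add: sets_eq_imp_space_eq[OF sets_act_dist])

lemma measurable_kernel_measure:
  "A \<in> sets MX \<Longrightarrow> (\<lambda>p. measure (K p) A) \<in> borel_measurable (act_dist MX MY sX sY t)"
  using measurable_compose[OF measurable_kernel measurable_measure_prob_algebra]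
  by (simp add: measurable_cong_sets[OF sets_act_dist refl])

lemma measure_act_dist_0_fst:
  assumes "A \<in> sets MX"
  shows "measure (act_dist MX MY sX sY 0) (A \<times> space MY) = measure s0 A"
proof -
  have "sX 0 (\<lambda>_. undefined) = s0"
    using memory_one by (simp add: memory_one_def space_hist_space_0)
  then show ?thesis
    using emeasure_act_dist_0_fst[OF assms] by (simp add: measure_def)
qed

lemma measure_act_dist_Suc_fst:
  assumes "A \<in> sets MX"
  shows "measure (act_dist MX MY sX sY (Suc t)) (A \<times> space MY)
    = (\<integral>p. measure (K p) A \<partial>act_dist MX MY sX sY t)"
proof -
  have "emeasure (act_dist MX MY sX sY (Suc t)) (A \<times> space MY)
      = (\<integral>\<^sup>+h. emeasure (K (h t)) A \<partial>play MX MY sX sY t)"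
    unfolding emeasure_act_dist_Suc_fst[OF assms]
    using memory_one by (intro nn_integral_cong) (simp add: memory_one_def space_play)
  also have "\<dots> = (\<integral>\<^sup>+p. emeasure (K p) A \<partial>act_dist MX MY sX sY t)"
    unfolding act_dist_def
    using measurable_compose[OF measurable_prob_algebraD[OF measurable_kernel] measurable_emeasure_subprob_algebra[OF assms]]
    by (simp add: nn_integral_distr[OF measurable_play_component])
  also have "\<dots> = (\<integral>\<^sup>+p. ennreal (measure (K p) A) \<partial>act_dist MX MY sX sY t)"
    using kernel_prob_algebra
    by (intro nn_integral_cong)
       (simp add: space_prob_algebra finite_measure.emeasure_eq_measure[OF prob_space.finite_measure])
  finally show ?thesis
    using measurable_kernel_measure[OF assms]
    by (simp add: measure_def integral_eq_nn_integral)
qed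

lemma integral_act_dist_discounted:
  assumes "E \<in> sets MX"
  shows "(\<integral>p. (indicator E (fst p) - c * measure (K p) E) \<partial>act_dist MX MY sX sY t)
    = measure (act_dist MX MY sX sY t) (E \<times> space MY) - c * measure (act_dist MX MY sX sY (Suc t)) (E \<times> space MY)"
proof -
  interpret prob_space "act_dist MX MY sX sY t" by (rule prob_space_act_dist)
  have "integrable (act_dist MX MY sX sY t) (\<lambda>p. indicator E (fst p) :: real)"
    using assms by (intro integrable_const_bound[where B=1]) (auto simp: measurable_cong_sets[OF sets_act_dist refl])
  moreover have "integrable (act_dist MX MY sX sY t) (\<lambda>p. measure (K p) E)"
    using kernel_prob_algebra measurable_kernel_measure[OF assms]
    by (intro integrable_const_bound[where B=1] AE_I2) (simp_all add: space_prob_algebra prob_space.prob_le_1)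
  ultimately show ?thesis
    using sets.sets_into_space[OF assms]
    by (simp add: integral_indicator_fst[OF sets_act_dist] Int_absorb2 measure_act_dist_Suc_fst[OF assms])
qed

end

theorem lemma3:
  fixes MX :: "'x measure" and MY :: "'y measure" and lam :: real
    and sX :: "nat \<Rightarrow> (nat \<Rightarrow> 'x \<times> 'y) \<Rightarrow> 'x measure"
    and sY :: "nat \<Rightarrow> (nat \<Rightarrow> 'x \<times> 'y) \<Rightarrow> 'y measure"
    and s0 :: "'x measure" and K :: "'x \<times> 'y \<Rightarrow> 'x measure" and E :: "'x set"
  assumes "0 < lam" and "lam < 1"
    and "memory_one MX MY sX s0 K"
    and "behavioral MX MY MY sY"
    and "E \<in> sets MX"
  shows "(\<lambda>t. lam ^ t * (\<integral>p. (indicator E (fst p) - lam * measure (K p) E)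
              \<partial>(act_dist MX MY sX sY t))) sums measure s0 E"
proof -
  interpret memory_one_profile MX MY sX sY s0 K
    using assms(3,4) by unfold_locales
  define a where "a t = measure (act_dist MX MY sX sY t) (E \<times> space MY)" for t
  have "\<bar>a t\<bar> \<le> 1" for t
    unfolding a_def using prob_space.prob_le_1[OF prob_space_act_dist] by simp
  from discounted_telescope_sums[of lam a, OF _ this] show ?thesis
    using assms(1,2) integral_act_dist_discounted[OF assms(5)] measure_act_dist_0_fst[OF assms(5)]
    by (simp add: a_def)
qed

end
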